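(* Let $q \in \mathbb{Z}_{\geqslant 1}$. For any real $x \geqslant 1$, $$\sum_{\substack{n \leqslant x \\ q \mid n}} \mu(n) \sum_{\substack{k \leqslant x/n \\ k \mid n^\infty}} 1 = \sum_{\substack{n \leqslant x \\ q \mid \gamma(n)}} (-1)^{\omega(n)}.$$
   Context: $\mu$ is the Möbius function, $\omega(n)$ the number of distinct prime factors of $n$, $\gamma(n) := \prod_{p \mid n} p$ the squarefree kernel of $n$, and $k \mid n^\infty$ means that every prime factor of $k$ is a prime factor of $n$. Sums run over positive integers. *)

theory Defs
  imports "HOL-Analysis.Analysis" "HOL-Computational_Algebra.Squarefree"
begin

definition moebius_mu :: "nat \<Rightarrow> int" where
  "moebius_mu n = (if n = 0 then 0 else if squarefree n then (-1) ^ card (prime_factors n) else 0)"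

definition omega :: "nat \<Rightarrow> nat" where
  "omega n = card (prime_factors n)"

definition rad :: "nat \<Rightarrow> nat" where
  "rad n = (\<Prod>p\<in>prime_factors n. p)"

text \<open>k divides n to the infinity: every prime factor of k divides n.\<close>
definition dvd_inf :: "nat \<Rightarrow> nat \<Rightarrow> bool" where
  "dvd_inf k n \<longleftrightarrow> (\<forall>p. prime p \<longrightarrow> p dvd k \<longrightarrow> p dvd n)"

end

theory Submission
  imports Defs
begin

text \<open>
  Every positive integer m factors uniquely as m = n k with n squarefree and k | n^\<infinity>,
  namely n = \<gamma>(m) and k = m / \<gamma>(m). Since \<mu> vanishes off the squarefree integers
  and equals (-1)^\<omega>(n) on them, the left-hand side counts each m \<le> x with q | \<gamma>(m)
  exactly once, with weight (-1)^\<omega>(\<gamma>(m)) = (-1)^\<omega>(m).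
\<close>

lemma finite_nat_le_real: "finite {n::nat. real n \<le> x}"
  by (rule finite_subset[of _ "{..nat \<lfloor>x\<rfloor>}"]) (auto simp: le_nat_floor)

lemma moebius_mu_squarefree: "squarefree n \<Longrightarrow> moebius_mu n = (-1) ^ omega n"
  by (cases "n = 0") (auto simp: moebius_mu_def omega_def)

lemma moebius_mu_not_squarefree: "\<not> squarefree n \<Longrightarrow> moebius_mu n = 0"
  by (simp add: moebius_mu_def)

lemma prime_factors_rad:
  assumes "m > 0"
  shows "prime_factors (rad m) = prime_factors (m::nat)"
proof -
  have "prime_factors (rad m) = (\<Union>p\<in>prime_factors m. prime_factors p)"
    unfolding rad_def using prime_factors_prod[of "prime_factors m" id]
    by auto
  also have "\<dots> = (\<Union>p\<in>prime_factors m. {p})"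
    by (intro SUP_cong refl) (metis in_prime_factors_imp_prime prime_prime_factors)
  finally show ?thesis by simp
qed

lemma omega_rad: "m > 0 \<Longrightarrow> omega (rad m) = omega m"
  by (simp add: omega_def prime_factors_rad)

lemma rad_pos: "rad m > 0"
  unfolding rad_def by (auto intro!: prod_pos prime_gt_0_nat)

lemma squarefree_rad: "squarefree (rad m)"
  unfolding rad_def
  by (rule squarefree_prod_coprime)
     (auto intro: primes_coprime squarefree_prime)

lemma rad_dvd:
  assumes "m > 0"
  shows "rad m dvd m"
proof -
  have "rad m = (\<Prod>p\<in>prime_factors m. p ^ 1)" unfolding rad_def by simp
  also have "\<dots> dvd (\<Prod>p\<in>prime_factors m. p ^ multiplicity p m)"
    by (intro prod_dvd_prod le_imp_power_dvd)
       (auto simp: prime_factors_multiplicity Suc_le_eq)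
  also have "\<dots> = m" using assms by (simp add: prod_prime_factors)
  finally show ?thesis .
qed

lemma rad_squarefree:
  assumes "squarefree n"
  shows "rad n = n"
proof -
  have n: "n \<noteq> 0" using assms by (metis not_squarefree_0)
  have "n = (\<Prod>p\<in>prime_factors n. p ^ multiplicity p n)" using n by (simp add: prod_prime_factors)
  also have "\<dots> = (\<Prod>p\<in>prime_factors n. p)"
    using assms n by (intro prod.cong) (auto simp: squarefree_factorial_semiring')
  finally show ?thesis unfolding rad_def by simp
qed

lemma prime_factors_mult_dvd_inf:
  assumes "n > 0" "k > 0" "dvd_inf k n"
  shows "prime_factors (n * k) = prime_factors n"
  using assms by (auto simp: prime_factors_product prime_factors_dvd dvd_inf_def prime_dvd_mult_iff)

lemma rad_mult_dvd_inf:
  assumes "squarefree n" "k > 0" "dvd_inf k n"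
  shows "rad (n * k) = n"
proof -
  have "n > 0" using assms(1) by (metis gr0I not_squarefree_0)
  then show ?thesis
    using prime_factors_mult_dvd_inf[OF _ assms(2,3)] rad_squarefree[OF assms(1)]
    by (simp add: rad_def)
qed

lemma dvd_inf_div_rad:
  assumes "m > 0"
  shows "dvd_inf (m div rad m) (rad m)"
  unfolding dvd_inf_def
proof (intro allI impI)
  fix p :: nat assume p: "prime p" "p dvd m div rad m"
  then have "p dvd m" using rad_dvd[OF assms] by (metis dvd_div_mult_self dvd_mult2)
  then have "p \<in> prime_factors (rad m)" using p assms by (simp add: prime_factors_rad prime_factors_dvd)
  then show "p dvd rad m" by (simp add: in_prime_factors_imp_dvd)
qed

lemma sum_squarefree_dvd_inf_decomposition:
  fixes g :: "nat \<Rightarrow> 'a::comm_monoid_add" and x :: real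
  shows "(\<Sum>n\<in>{n. 1 \<le> n \<and> real n \<le> x \<and> P n \<and> squarefree n}.
            \<Sum>k\<in>{k. 1 \<le> k \<and> real k \<le> x / real n \<and> dvd_inf k n}. g n)
       = (\<Sum>m\<in>{m. 1 \<le> m \<and> real m \<le> x \<and> P (rad m)}. g (rad m))"
    (is "(\<Sum>n\<in>?A. \<Sum>k\<in>?K n. _) = (\<Sum>m\<in>?B. _)")
proof -
  have "(\<Sum>n\<in>?A. \<Sum>k\<in>?K n. g n) = (\<Sum>(n,k)\<in>Sigma ?A ?K. g n)"
    by (rule sum.Sigma) (auto intro: finite_subset[OF _ finite_nat_le_real])
  also have "\<dots> = (\<Sum>m\<in>?B. g (rad m))"
  proof (rule sum.reindex_bij_witness[where i = "\<lambda>m. (rad m, m div rad m)" and j = "\<lambda>(n,k). n * k"])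
    fix a assume "a \<in> Sigma ?A ?K"
    then obtain n k where a: "a = (n, k)" and n: "n \<ge> 1" "real n \<le> x" "P n" "squarefree n"
      and k: "k \<ge> 1" "real k \<le> x / real n" "dvd_inf k n"
      by auto
    have rad_nk: "rad (n * k) = n" using n k by (intro rad_mult_dvd_inf) auto
    have "real (n * k) \<le> x" using n(1) k(2) by (simp add: le_divide_eq mult.commute)
    then show "(case a of (n, k) \<Rightarrow> n * k) \<in> ?B" using a n k rad_nk by simp
    show "(rad (case a of (n, k) \<Rightarrow> n * k), (case a of (n, k) \<Rightarrow> n * k) div rad (case a of (n, k) \<Rightarrow> n * k)) = a"
      using a rad_nk n(1) by simp
    show "g (rad (case a of (n, k) \<Rightarrow> n * k)) = (case a of (n, k) \<Rightarrow> g n)"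
      using a rad_nk by simp
  next
    fix m assume "m \<in> ?B"
    then have m: "m \<ge> 1" "real m \<le> x" "P (rad m)" by auto
    have rad_dvd_m: "rad m dvd m" using m by (intro rad_dvd) auto
    then show "(case (rad m, m div rad m) of (n, k) \<Rightarrow> n * k) = m" by simp
    have "rad m \<le> m" using rad_dvd_m m by (intro dvd_imp_le) auto
    moreover have "m div rad m \<ge> 1" using rad_dvd_m m rad_pos[of m]
      by (metis dvd_div_mult_self less_one mult_is_0 not_less)
    moreover have "real (m div rad m) * real (rad m) = real m"
      using rad_dvd_m by (metis dvd_div_mult_self of_nat_mult)
    then have "real (m div rad m) \<le> x / real (rad m)"
      using m rad_pos[of m] by (simp add: le_divide_eq)
    ultimately show "(rad m, m div rad m) \<in> Sigma ?A ?K"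
      using m rad_pos[of m] dvd_inf_div_rad[of m] squarefree_rad[of m]
      by (auto intro: order.trans[of _ "real m"])
  qed
  finally show ?thesis .
qed

theorem lemma3p2:
  fixes q :: nat and x :: real
  assumes "q \<ge> 1" and "x \<ge> 1"
  shows "(\<Sum>n\<in>{n. 1 \<le> n \<and> real n \<le> x \<and> q dvd n}.
            moebius_mu n * int (card {k. 1 \<le> k \<and> real k \<le> x / real n \<and> dvd_inf k n}))
       = (\<Sum>n\<in>{n. 1 \<le> n \<and> real n \<le> x \<and> q dvd rad n}. (-1::int) ^ omega n)"
proof -
  let ?K = "\<lambda>n. {k. 1 \<le> k \<and> real k \<le> x / real n \<and> dvd_inf k n}"
  have "(\<Sum>n\<in>{n. 1 \<le> n \<and> real n \<le> x \<and> q dvd n}. moebius_mu n * int (card (?K n)))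
      = (\<Sum>n\<in>{n. 1 \<le> n \<and> real n \<le> x \<and> q dvd n \<and> squarefree n}. moebius_mu n * int (card (?K n)))"
    by (rule sum.mono_neutral_right)
       (auto intro: finite_subset[OF _ finite_nat_le_real] simp: moebius_mu_not_squarefree)
  also have "\<dots> = (\<Sum>n\<in>{n. 1 \<le> n \<and> real n \<le> x \<and> q dvd n \<and> squarefree n}. \<Sum>k\<in>?K n. (-1) ^ omega n)"
    by (intro sum.cong refl) (simp add: moebius_mu_squarefree)
  also have "\<dots> = (\<Sum>m\<in>{m. 1 \<le> m \<and> real m \<le> x \<and> q dvd rad m}. (-1) ^ omega (rad m))"
    by (rule sum_squarefree_dvd_inf_decomposition)
  also have "\<dots> = (\<Sum>m\<in>{m. 1 \<le> m \<and> real m \<le> x \<and> q dvd rad m}. (-1) ^ omega m)"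
    by (intro sum.cong refl) (simp add: omega_rad)
  finally show ?thesis .
qed

end
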